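(* Let $\nu\ge2$ and $2\le n,m\le\nu$ be fixed integers and let $M\ge1$. Let $$P_1(Z)=\sum_{i=0}^{n-1}a_iZ^i\qquad\text{and}\qquad P_2(Z)=\sum_{i=0}^{m-1}b_iZ^i$$ be polynomials with complex coefficients such that $a_{n-1},b_{m-1}\ne0$ and $|a_i|,|b_i|<M^{\nu-i}$ for all $i=0,\ldots,\nu-1$ (for which these coefficients are defined). Then $$|\mathrm{Res}(P_1,P_2)|\ll M^{\nu^2-1},$$ where the implied constant depends only on $\nu$.
   Context: $\mathrm{Res}(P_1,P_2)$ denotes the resultant, i.e. the determinant of the $(n+m-2)\times(n+m-2)$ Sylvester matrix whose first $m-1$ rows are the shifted coefficient rows $(a_{n-1},\ldots,a_1,a_0)$ of $P_1$ and whose last $n-1$ rows are the shifted coefficient rows $(b_{m-1},\ldots,b_1,b_0)$ of $P_2$. *)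

theory Defs
  imports "HOL-Analysis.Analysis" "Subresultants.Resultant_Prelim"
begin

end

theory Submission
  imports Defs
begin

text \<open>Multiply row \<open>i\<close> of the Sylvester matrix by \<open>M\<^sup>i\<close>, the first \<open>deg P\<^sub>2\<close> rows
  additionally by \<open>M\<^bsup>deg P\<^sub>1\<^esup>\<close>, and divide column \<open>j\<close> by \<open>M\<^sup>j\<close>: then every entry is
  bounded by \<open>M\<^sup>\<nu>\<close>, so the Leibniz expansion bounds the determinant of the rescaled matrix
  by \<open>N! M\<^bsup>\<nu>N\<^esup>\<close> with \<open>N = deg P\<^sub>1 + deg P\<^sub>2\<close>. Undoing the rescaling gains the factor
  \<open>M\<^bsup>deg P\<^sub>1 deg P\<^sub>2\<^esup>\<close>, and \<open>\<nu>N - deg P\<^sub>1 deg P\<^sub>2 = \<nu>\<^sup>2 - (\<nu> - deg P\<^sub>1)(\<nu> - deg P\<^sub>2) \<le> \<nu>\<^sup>2 - 1\<close>.\<close>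

lemma norm_det_le_weighted:
  fixes A :: "'a :: real_normed_field mat"
  assumes A: "A \<in> carrier_mat N N"
    and r: "\<And>i. i < N \<Longrightarrow> r i > 0"
    and entry: "\<And>i j. i < N \<Longrightarrow> j < N \<Longrightarrow> norm (A $$ (i,j)) * r i \<le> K * c j"
  shows "norm (det A) * (\<Prod>i<N. r i) \<le> fact N * K ^ N * (\<Prod>j<N. c j)"
proof -
  let ?P = "{p. p permutes {..<N}}"
  have "norm (det A) \<le> (\<Sum>p\<in>?P. norm (signof p * (\<Prod>i<N. A $$ (i, p i))))"
    unfolding det_def'[OF A] atLeast0LessThan by (rule norm_sum)
  also have "\<dots> = (\<Sum>p\<in>?P. \<Prod>i<N. norm (A $$ (i, p i)))"
    by (intro sum.cong refl) (simp add: norm_mult prod_norm sign_def)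
  finally have "norm (det A) * (\<Prod>i<N. r i) \<le> (\<Sum>p\<in>?P. \<Prod>i<N. norm (A $$ (i, p i))) * (\<Prod>i<N. r i)"
    using r by (intro mult_right_mono prod_nonneg) (auto intro: less_imp_le)
  also have "\<dots> = (\<Sum>p\<in>?P. \<Prod>i<N. norm (A $$ (i, p i)) * r i)"
    by (simp add: sum_distrib_right prod.distrib)
  also have "\<dots> \<le> (\<Sum>p\<in>?P. \<Prod>i<N. K * c (p i))"
  proof (intro sum_mono prod_mono conjI)
    fix p i assume p: "p \<in> ?P" and i: "i \<in> {..<N}"
    then have "p i < N" using permutes_in_image[of p "{..<N}" i] by simp
    then show "norm (A $$ (i, p i)) * r i \<le> K * c (p i)" using entry i by auto
    show "0 \<le> norm (A $$ (i, p i)) * r i" using r[of i] i by simp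
  qed
  also have "\<dots> = (\<Sum>p\<in>?P. K ^ N * (\<Prod>j<N. c j))"
  proof (intro sum.cong refl)
    fix p assume "p \<in> ?P"
    then have "(\<Prod>i<N. c (p i)) = (\<Prod>j<N. c j)"
      using prod.permute[of p "{..<N}" c] by (simp add: comp_def)
    then show "(\<Prod>i<N. K * c (p i)) = K ^ N * (\<Prod>j<N. c j)"
      by (simp add: prod.distrib)
  qed
  also have "\<dots> = fact N * K ^ N * (\<Prod>j<N. c j)"
    by (simp add: card_permutations)
  finally show ?thesis .
qed

lemma sylvester_mat_entry_weighted_le:
  fixes p q :: "'a :: real_normed_field poly" and M :: real
  assumes M: "M > 0" and deg: "degree p \<le> \<nu>" "degree q \<le> \<nu>"
    and coeff_p: "\<And>k. k \<le> degree p \<Longrightarrow> norm (coeff p k) \<le> M ^ (\<nu> - k)"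
    and coeff_q: "\<And>k. k \<le> degree q \<Longrightarrow> norm (coeff q k) \<le> M ^ (\<nu> - k)"
    and ij: "i < degree p + degree q" "j < degree p + degree q"
  shows "norm (sylvester_mat p q $$ (i,j)) * (M ^ i * (if i < degree q then M ^ degree p else 1))
           \<le> M ^ \<nu> * M ^ j"
proof -
  let ?dp = "degree p" and ?dq = "degree q"
  have entry: "sylvester_mat p q $$ (i,j) =
      (if i < ?dq then if i \<le> j \<and> j - i \<le> ?dp then coeff p (?dp + i - j) else 0
       else if i - ?dq \<le> j \<and> j \<le> i then coeff q (i - j) else 0)"
    using sylvester_index_mat[OF ij] .
  have "M ^ \<nu> * M ^ j \<ge> 0" using M by simp
  moreover have "norm (coeff p (?dp + i - j)) * (M ^ i * M ^ ?dp) \<le> M ^ \<nu> * M ^ j"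
    if "i \<le> j" "j - i \<le> ?dp"
  proof -
    have "norm (coeff p (?dp + i - j)) * (M ^ i * M ^ ?dp) \<le> M ^ (\<nu> - (?dp + i - j)) * (M ^ i * M ^ ?dp)"
      using coeff_p[of "?dp + i - j"] that M by (intro mult_right_mono) auto
    also have "\<nu> - (?dp + i - j) + i + ?dp = \<nu> + j" using that deg by linarith
    then have "M ^ (\<nu> - (?dp + i - j)) * (M ^ i * M ^ ?dp) = M ^ \<nu> * M ^ j"
      by (metis power_add mult.assoc)
    finally show ?thesis .
  qed
  moreover have "norm (coeff q (i - j)) * M ^ i \<le> M ^ \<nu> * M ^ j"
    if "i - ?dq \<le> j" "j \<le> i"
  proof -
    have "norm (coeff q (i - j)) * M ^ i \<le> M ^ (\<nu> - (i - j)) * M ^ i"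
      using coeff_q[of "i - j"] that M by (intro mult_right_mono) auto
    also have "\<nu> - (i - j) + i = \<nu> + j" using that deg by linarith
    then have "M ^ (\<nu> - (i - j)) * M ^ i = M ^ \<nu> * M ^ j"
      by (metis power_add)
    finally show ?thesis .
  qed
  ultimately show ?thesis unfolding entry by auto
qed

lemma norm_resultant_le:
  fixes p q :: "'a :: real_normed_field poly" and M :: real
  assumes M: "M > 0" and deg: "degree p \<le> \<nu>" "degree q \<le> \<nu>"
    and coeff_p: "\<And>k. k \<le> degree p \<Longrightarrow> norm (coeff p k) \<le> M ^ (\<nu> - k)"
    and coeff_q: "\<And>k. k \<le> degree q \<Longrightarrow> norm (coeff q k) \<le> M ^ (\<nu> - k)"
  shows "norm (resultant p q)
           \<le> fact (degree p + degree q) * M ^ (\<nu> * (degree p + degree q) - degree p * degree q)"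
proof -
  define dp dq where "dp = degree p" and "dq = degree q"
  define N where "N = dp + dq"
  define r where "r i = M ^ i * (if i < dq then M ^ dp else 1)" for i
  define X where "X = (\<Prod>j<N. M ^ j)"
  have "norm (det (sylvester_mat p q)) * (\<Prod>i<N. r i) \<le> fact N * (M ^ \<nu>) ^ N * X"
    unfolding X_def
  proof (rule norm_det_le_weighted)
    show "sylvester_mat p q \<in> carrier_mat N N"
      by (simp add: N_def dp_def dq_def sylvester_carrier_mat)
    show "r i > 0" for i using M by (simp add: r_def)
    show "norm (sylvester_mat p q $$ (i,j)) * r i \<le> M ^ \<nu> * M ^ j" if "i < N" "j < N" for i j
      using sylvester_mat_entry_weighted_le[OF assms] that unfolding r_def N_def dp_def dq_def by blast
  qed
  moreover have "(\<Prod>i<N. r i) = X * M ^ (dp * dq)"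
  proof -
    have "{..<N} \<inter> {i. i < dq} = {..<dq}" by (auto simp: N_def)
    then have "(\<Prod>i<N. if i < dq then M ^ dp else 1) = M ^ (dp * dq)"
      by (simp add: prod.If_cases power_mult mult.commute)
    then show ?thesis by (simp add: r_def X_def prod.distrib)
  qed
  moreover have "(M ^ \<nu>) ^ N = M ^ (\<nu> * N - dp * dq) * M ^ (dp * dq)"
  proof -
    have "dp * dq \<le> \<nu> * dq" using deg by (simp add: dp_def)
    also have "\<nu> * dq \<le> \<nu> * N" by (simp add: N_def)
    finally have "dp * dq \<le> \<nu> * N" .
    then show ?thesis by (simp flip: power_mult power_add)
  qed
  moreover have "X > 0" using M by (simp add: X_def prod_pos)
  ultimately have "(norm (resultant p q) * X) * M ^ (dp * dq)
                     \<le> (fact N * M ^ (\<nu> * N - dp * dq) * X) * M ^ (dp * dq)"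
    by (simp add: resultant_def mult_ac)
  with M \<open>X > 0\<close> show ?thesis by (simp add: N_def dp_def dq_def)
qed

lemma resultant_exponent_le:
  fixes \<nu> a b :: nat
  assumes "1 \<le> a" "a < \<nu>" "1 \<le> b" "b < \<nu>"
  shows "\<nu> * (a + b) - a * b \<le> \<nu>\<^sup>2 - 1"
proof -
  have "(int \<nu> - int a) * (int \<nu> - int b) \<ge> 1 * 1"
    using assms by (intro mult_mono) auto
  then have "\<nu> * (a + b) + 1 \<le> \<nu> * \<nu> + a * b"
    by (simp add: algebra_simps flip: of_nat_mult of_nat_add)
  then show ?thesis by (simp add: power2_eq_square)
qed

theorem corollary2p31:
  fixes \<nu> :: nat
  assumes "\<nu> \<ge> 2"
  shows "\<exists>C::real. \<forall>(n::nat) (m::nat) (M::real) (P1::complex poly) (P2::complex poly).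
     2 \<le> n \<and> n \<le> \<nu> \<and> 2 \<le> m \<and> m \<le> \<nu> \<and> M \<ge> 1 \<and>
     degree P1 = n - 1 \<and> coeff P1 (n - 1) \<noteq> 0 \<and>
     degree P2 = m - 1 \<and> coeff P2 (m - 1) \<noteq> 0 \<and>
     (\<forall>i < n. norm (coeff P1 i) < M ^ (\<nu> - i)) \<and>
     (\<forall>i < m. norm (coeff P2 i) < M ^ (\<nu> - i))
     \<longrightarrow> norm (resultant P1 P2) \<le> C * M ^ (\<nu>\<^sup>2 - 1)"
proof (intro exI allI impI)
  fix n m :: nat and M :: real and P1 P2 :: "complex poly"
  assume H: "2 \<le> n \<and> n \<le> \<nu> \<and> 2 \<le> m \<and> m \<le> \<nu> \<and> M \<ge> 1 \<and>
     degree P1 = n - 1 \<and> coeff P1 (n - 1) \<noteq> 0 \<and>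
     degree P2 = m - 1 \<and> coeff P2 (m - 1) \<noteq> 0 \<and>
     (\<forall>i < n. norm (coeff P1 i) < M ^ (\<nu> - i)) \<and>
     (\<forall>i < m. norm (coeff P2 i) < M ^ (\<nu> - i))"
  define N e where "N = degree P1 + degree P2" and "e = \<nu> * N - degree P1 * degree P2"
  have "norm (resultant P1 P2) \<le> fact N * M ^ e"
    unfolding N_def e_def using H by (intro norm_resultant_le) (auto intro: less_imp_le)
  also have "\<dots> \<le> fact (2 * \<nu>) * M ^ (\<nu>\<^sup>2 - 1)"
  proof (intro mult_mono power_increasing fact_mono)
    show "e \<le> \<nu>\<^sup>2 - 1" unfolding e_def N_def using H by (intro resultant_exponent_le) auto
  qed (use H in \<open>auto simp: N_def\<close>)
  finally show "norm (resultant P1 P2) \<le> fact (2 * \<nu>) * M ^ (\<nu>\<^sup>2 - 1)" .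
qed

end
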